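(* Let $k\ge2$ be an integer and let $H_k$ be the graph with half-edges obtained from $K_{k,k}$ by deleting one vertex but keeping its $k$ incident edges as half-edges. Let $e\ne e'$ be two half-edges of $H_k$ with end vertices $x$ and $x'$ respectively. Then for every positive integer $n$, $H_k$ admits an $(n(k+1)+1,n)$-total colouring $\gamma$ such that $\gamma(e)=0$, $\gamma(e')=1$, $\gamma(x)=n+1$ and $\gamma(x')=nk+1$.
   Context: A half-edge has exactly one end vertex. For integers $p\ge q\ge1$, a $(p,q)$-total colouring of a graph (possibly with half-edges) is a map $c$ from the set of vertices, edges and half-edges to $\{0,1,\ldots,p-1\}$ such that $q\le|c(a)-c(b)|\le p-q$ whenever $a,b$ are two adjacent vertices, two edges/half-edges sharing an end vertex, or a vertex and an edge or half-edge incident with it. *)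

theory Defs
  imports Main
begin

text \<open>Graphs with half-edges, given by a vertex set V, a set Es of edges and
half-edges, and a map ends giving the set of end vertices of each element of Es
(two vertices for an ordinary edge, one for a half-edge).\<close>

definition sep_ok :: "nat \<Rightarrow> nat \<Rightarrow> nat \<Rightarrow> nat \<Rightarrow> bool" where
  "sep_ok p q a b \<longleftrightarrow>
     int q \<le> \<bar>int a - int b\<bar> \<and> \<bar>int a - int b\<bar> \<le> int p - int q"

definition total_colouring ::
  "nat \<Rightarrow> nat \<Rightarrow> 'a set \<Rightarrow> 'a set \<Rightarrow> ('a \<Rightarrow> 'a set) \<Rightarrow> ('a \<Rightarrow> nat) \<Rightarrow> bool" where
  "total_colouring p q V Es ends c \<longleftrightarrow>
     (\<forall>a \<in> V \<union> Es. c a < p) \<and>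
     (\<forall>u\<in>V. \<forall>v\<in>V. u \<noteq> v \<and> (\<exists>e\<in>Es. ends e = {u, v}) \<longrightarrow> sep_ok p q (c u) (c v)) \<and>
     (\<forall>e\<in>Es. \<forall>f\<in>Es. e \<noteq> f \<and> ends e \<inter> ends f \<noteq> {} \<longrightarrow> sep_ok p q (c e) (c f)) \<and>
     (\<forall>v\<in>V. \<forall>e\<in>Es. v \<in> ends e \<longrightarrow> sep_ok p q (c v) (c e))"

text \<open>H_k: K_{k,k} with parts {VA i | i<k} and {VB j | j<k}; the vertex VB (k-1)
is deleted and its k incident edges kept as half-edges HE i at VA i.\<close>

datatype hk_elt = VA nat | VB nat | Ed nat nat | HE nat

definition hk_vertices :: "nat \<Rightarrow> hk_elt set" where
  "hk_vertices k = {VA i | i. i < k} \<union> {VB j | j. j < k - 1}"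

definition hk_half_edges :: "nat \<Rightarrow> hk_elt set" where
  "hk_half_edges k = {HE i | i. i < k}"

definition hk_edges :: "nat \<Rightarrow> hk_elt set" where
  "hk_edges k = {Ed i j | i j. i < k \<and> j < k - 1} \<union> hk_half_edges k"

fun hk_ends :: "hk_elt \<Rightarrow> hk_elt set" where
  "hk_ends (Ed i j) = {VA i, VB j}"
| "hk_ends (HE i) = {VA i}"
| "hk_ends _ = {}"

end

theory Submission
  imports Defs "HOL-Number_Theory.Cong" "HOL-Combinatorics.Transposition"
begin

text \<open>A Latin square \<open>L\<close> on \<open>{..<k}\<close> with symbols \<open>1..k\<close> is a proper edge colouring of
  \<open>K\<^sub>k\<^sub>,\<^sub>k\<close>; column \<open>k - 1\<close> belongs to the deleted vertex, so give \<open>VA i\<close> the symbol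
  \<open>L i (k - 1)\<close> of its deleted edge, and give the vertices \<open>VB j\<close> and the half-edges the extra
  symbol 0. Any two touching elements then carry distinct symbols in \<open>0..k\<close>, and realising
  symbol \<open>s\<close> as colour \<open>n * s + 1\<close> spaces them at least \<open>n\<close> and at most \<open>n * k\<close> apart, as
  required for an \<open>(n (k + 1) + 1, n)\<close>-total colouring. The half-edge at \<open>VA a\<close> only touches
  elements with symbol at least 1, so it may be lowered to colour 0. Finally, a cyclic Latin
  square with permuted rows has 1 and \<open>k\<close> in any two prescribed rows of its last column.\<close>

lemma sep_ok_commute: "sep_ok p q a b \<longleftrightarrow> sep_ok p q b a"
  by (simp add: sep_ok_def abs_minus_commute)

lemma sep_ok_multiples:
  assumes "s \<noteq> t" "s \<le> k" "t \<le> k"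
  shows "sep_ok (n * (k + 1) + 1) n (n * s + 1) (n * t + 1)"
proof -
  have dist: "\<bar>int (n * s + 1) - int (n * t + 1)\<bar> = int n * \<bar>int s - int t\<bar>"
    by (simp add: abs_mult flip: right_diff_distrib)
  have "1 \<le> \<bar>int s - int t\<bar>" "\<bar>int s - int t\<bar> \<le> int k"
    using assms by linarith+
  then have "int n * 1 \<le> int n * \<bar>int s - int t\<bar>" "int n * \<bar>int s - int t\<bar> \<le> int n * int k"
    by (meson mult_left_mono of_nat_0_le_iff)+
  moreover have "int (n * (k + 1) + 1) - int n = int n * int k + 1"
    by (simp add: algebra_simps)
  ultimately show ?thesis
    unfolding sep_ok_def dist by linarith
qed

lemma sep_ok_zero_multiple:
  assumes "1 \<le> s" "s \<le> k"
  shows "sep_ok (n * (k + 1) + 1) n 0 (n * s + 1)"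
proof -
  have "int n * 1 \<le> int n * int s" "int n * int s \<le> int n * int k"
    using assms by (intro mult_left_mono; simp)+
  then show ?thesis
    unfolding sep_ok_def by (simp add: algebra_simps)
qed

lemma sep_ok_half_edge_colour:
  assumes "c \<in> {0, 1}" "1 \<le> s" "s \<le> k"
  shows "sep_ok (n * (k + 1) + 1) n c (n * s + 1)"
  using assms sep_ok_zero_multiple[of s k n] sep_ok_multiples[of 0 s k n] by auto

definition latin_square :: "nat \<Rightarrow> (nat \<Rightarrow> nat \<Rightarrow> nat) \<Rightarrow> bool" where
  "latin_square k L \<longleftrightarrow>
     (\<forall>i<k. \<forall>j<k. L i j \<in> {1..k}) \<and>
     (\<forall>i<k. inj_on (L i) {..<k}) \<and>
     (\<forall>j<k. inj_on (\<lambda>i. L i j) {..<k})"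

lemma inj_on_add_mod: "inj_on (\<lambda>x. (x + c) mod k) {..<(k::nat)}"
proof
  fix x y assume "x \<in> {..<k}" "y \<in> {..<k}" "(x + c) mod k = (y + c) mod k"
  then show "x = y"
    using cong_add_rcancel_nat[of x c y k] by (simp add: cong_def)
qed

lemma latin_square_cyclic:
  assumes \<pi>: "bij_betw \<pi> {..<k} {..<k}"
  shows "latin_square k (\<lambda>i j. (\<pi> i + j) mod k + 1)"
proof -
  have columns: "inj_on (\<lambda>i. (\<pi> i + j) mod k + 1) {..<k}" for j
  proof (rule inj_onI)
    fix i i' assume i: "i \<in> {..<k}" "i' \<in> {..<k}"
      and "(\<pi> i + j) mod k + 1 = (\<pi> i' + j) mod k + 1"
    then have "(\<pi> i + j) mod k = (\<pi> i' + j) mod k"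
      by simp
    moreover have "\<pi> i \<in> {..<k}" "\<pi> i' \<in> {..<k}"
      using bij_betw_apply[OF \<pi>] i by auto
    ultimately have "\<pi> i = \<pi> i'"
      by (rule inj_onD[OF inj_on_add_mod])
    then show "i = i'"
      by (rule inj_onD[OF bij_betw_imp_inj_on[OF \<pi>]]) (use i in auto)
  qed
  have rows: "inj_on (\<lambda>j. (\<pi> i + j) mod k + 1) {..<k}" for i
  proof (rule inj_onI)
    fix j j' assume j: "j \<in> {..<k}" "j' \<in> {..<k}"
      and "(\<pi> i + j) mod k + 1 = (\<pi> i + j') mod k + 1"
    then have "(j + \<pi> i) mod k = (j' + \<pi> i) mod k"
      by (simp add: add.commute[of "\<pi> i"])
    then show "j = j'"
      using inj_onD[OF inj_on_add_mod] j by blast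
  qed
  show ?thesis
    unfolding latin_square_def using columns rows by (simp add: Suc_leI)
qed

lemma latin_square_last_column:
  assumes "a < k" "b < k" "a \<noteq> b"
  shows "\<exists>L. latin_square k L \<and> L a (k - 1) = 1 \<and> L b (k - 1) = k"
proof -
  define \<pi> where "\<pi> = transpose 1 (transpose 0 b a) \<circ> transpose 0 b"
  have "1 < k" "transpose 0 b a \<noteq> 0" "transpose 0 b a < k"
    using assms by (auto simp: transpose_def)
  then have "bij_betw \<pi> {..<k} {..<k}"
    unfolding \<pi>_def using assms
    by (intro bij_betw_trans[of _ _ "{..<k}"] bij_betw_transpose_iff) auto
  moreover have "\<pi> a = 1" "\<pi> b = 0"
    unfolding \<pi>_def using \<open>transpose 0 b a \<noteq> 0\<close> by simp_all
  moreover have "(1 + (k - 1)) mod k = 0" "(0 + (k - 1)) mod k + 1 = k"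
    using \<open>1 < k\<close> by simp_all
  ultimately show ?thesis
    using latin_square_cyclic by fastforce
qed

lemma latin_square_entry:
  "latin_square k L \<Longrightarrow> i < k \<Longrightarrow> j < k \<Longrightarrow> 1 \<le> L i j \<and> L i j \<le> k"
  unfolding latin_square_def by auto

lemma latin_square_row_inj:
  "latin_square k L \<Longrightarrow> i < k \<Longrightarrow> j < k \<Longrightarrow> j' < k \<Longrightarrow> L i j = L i j' \<Longrightarrow> j = j'"
  unfolding latin_square_def by (auto dest: inj_onD)

lemma latin_square_column_inj:
  "latin_square k L \<Longrightarrow> i < k \<Longrightarrow> i' < k \<Longrightarrow> j < k \<Longrightarrow> L i j = L i' j \<Longrightarrow> i = i'"
  unfolding latin_square_def by (auto dest: inj_onD)

lemma mem_hk_vertices: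
  "v \<in> hk_vertices k \<longleftrightarrow> (\<exists>i. v = VA i \<and> i < k) \<or> (\<exists>j. v = VB j \<and> j < k - 1)"
  by (auto simp: hk_vertices_def)

lemma mem_hk_edges:
  "e \<in> hk_edges k \<longleftrightarrow> (\<exists>i j. e = Ed i j \<and> i < k \<and> j < k - 1) \<or> (\<exists>i. e = HE i \<and> i < k)"
  by (auto simp: hk_edges_def hk_half_edges_def)

fun hk_colouring :: "nat \<Rightarrow> nat \<Rightarrow> nat \<Rightarrow> (nat \<Rightarrow> nat \<Rightarrow> nat) \<Rightarrow> hk_elt \<Rightarrow> nat" where
  "hk_colouring k n a L (VA i) = n * L i (k - 1) + 1"
| "hk_colouring k n a L (VB j) = 1"
| "hk_colouring k n a L (Ed i j) = n * L i j + 1"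
| "hk_colouring k n a L (HE i) = (if i = a then 0 else 1)"

lemma hk_colouring_less:
  assumes L: "latin_square k L" and "n \<ge> 1" and c: "c \<in> hk_vertices k \<union> hk_edges k"
  shows "hk_colouring k n a L c < n * (k + 1) + 1"
proof -
  have "n * L i j + 1 < n * (k + 1) + 1" if "i < k" "j < k" for i j
  proof -
    have "n * L i j \<le> n * k"
      using latin_square_entry[OF L that] by simp
    moreover have "n * (k + 1) + 1 = n * k + n + 1"
      by simp
    ultimately show ?thesis
      using \<open>n \<ge> 1\<close> by linarith
  qed
  then show ?thesis
    using c \<open>n \<ge> 1\<close> unfolding mem_hk_vertices mem_hk_edges Un_iff by fastforce
qed

lemma hk_colouring_adjacent_vertices:
  assumes L: "latin_square k L" and e: "e \<in> hk_edges k" "hk_ends e = {u, v}" and "u \<noteq> v"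
  shows "sep_ok (n * (k + 1) + 1) n (hk_colouring k n a L u) (hk_colouring k n a L v)"
proof -
  obtain i j where ij: "e = Ed i j" "i < k" "j < k - 1"
    using e \<open>u \<noteq> v\<close> unfolding mem_hk_edges by (auto simp: doubleton_eq_iff)
  have "L i (k - 1) \<noteq> 0" "L i (k - 1) \<le> k"
    using latin_square_entry[OF L, of i "k - 1"] ij by auto
  then have "sep_ok (n * (k + 1) + 1) n (n * L i (k - 1) + 1) (n * 0 + 1)"
    by (intro sep_ok_multiples) auto
  then show ?thesis
    using e ij by (auto simp: doubleton_eq_iff sep_ok_commute)
qed

lemma hk_colouring_half_edge_edge:
  assumes L: "latin_square k L" and "i < k" "j < k - 1"
  shows "sep_ok (n * (k + 1) + 1) n (hk_colouring k n a L (HE i)) (hk_colouring k n a L (Ed i j))"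
proof -
  have "1 \<le> L i j" "L i j \<le> k"
    using latin_square_entry[OF L, of i j] assms by auto
  then show ?thesis
    unfolding hk_colouring.simps by (intro sep_ok_half_edge_colour) auto
qed

lemma hk_colouring_adjacent_edges:
  assumes L: "latin_square k L" and e: "e \<in> hk_edges k" and f: "f \<in> hk_edges k"
    and "e \<noteq> f" and common_end: "hk_ends e \<inter> hk_ends f \<noteq> {}"
  shows "sep_ok (n * (k + 1) + 1) n (hk_colouring k n a L e) (hk_colouring k n a L f)"
proof -
  have edges: "sep_ok (n * (k + 1) + 1) n (n * L i j + 1) (n * L i' j' + 1)"
    if "Ed i j \<noteq> Ed i' j'" "i = i' \<or> j = j'" "i < k" "i' < k" "j < k" "j' < k" for i j i' j'
  proof (rule sep_ok_multiples)
    show "L i j \<noteq> L i' j'"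
      using that latin_square_row_inj[OF L] latin_square_column_inj[OF L] by blast
    show "L i j \<le> k" "L i' j' \<le> k"
      using that latin_square_entry[OF L] by auto
  qed
  from e f show ?thesis
    unfolding mem_hk_edges
  proof (elim disjE exE conjE)
    fix i j i' j' assume "e = Ed i j" "i < k" "j < k - 1" "f = Ed i' j'" "i' < k" "j' < k - 1"
    then show ?thesis
      using edges[of i j i' j'] \<open>e \<noteq> f\<close> common_end by auto
  next
    fix i j i' assume "e = Ed i j" "i < k" "j < k - 1" "f = HE i'"
    then show ?thesis
      using hk_colouring_half_edge_edge[OF L] common_end by (auto simp: sep_ok_commute)
  next
    fix i i' j' assume "e = HE i" "f = Ed i' j'" "i' < k" "j' < k - 1"
    then show ?thesis
      using hk_colouring_half_edge_edge[OF L] common_end by auto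
  next
    fix i i' assume "e = HE i" "f = HE i'"
    then show ?thesis
      using \<open>e \<noteq> f\<close> common_end by auto
  qed
qed

lemma hk_colouring_incident:
  assumes L: "latin_square k L" and e: "e \<in> hk_edges k" and "v \<in> hk_ends e"
  shows "sep_ok (n * (k + 1) + 1) n (hk_colouring k n a L v) (hk_colouring k n a L e)"
  using e unfolding mem_hk_edges
proof (elim disjE exE conjE)
  fix i j assume ij: "e = Ed i j" "i < k" "j < k - 1"
  have "j < k" "k - 1 < k"
    using ij by auto
  have distinct: "L i (k - 1) \<noteq> L i j"
  proof
    assume "L i (k - 1) = L i j"
    then have "k - 1 = j"
      by (rule latin_square_row_inj[OF L ij(2) \<open>k - 1 < k\<close> \<open>j < k\<close>])
    with ij(3) show False
      by simp
  qed
  have range: "L i j \<noteq> 0" "L i j \<le> k" "L i (k - 1) \<le> k"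
    using latin_square_entry[OF L ij(2) \<open>j < k\<close>] latin_square_entry[OF L ij(2) \<open>k - 1 < k\<close>]
    by auto
  have "sep_ok (n * (k + 1) + 1) n (n * L i (k - 1) + 1) (n * L i j + 1)"
    "sep_ok (n * (k + 1) + 1) n (n * 0 + 1) (n * L i j + 1)"
    by (rule sep_ok_multiples; use distinct range in auto)+
  then show ?thesis
    using \<open>v \<in> hk_ends e\<close> ij by auto
next
  fix i assume "e = HE i" "i < k"
  then have "1 \<le> L i (k - 1)" "L i (k - 1) \<le> k"
    using latin_square_entry[OF L, of i "k - 1"] by auto
  then have "sep_ok (n * (k + 1) + 1) n (hk_colouring k n a L (HE i)) (hk_colouring k n a L (VA i))"
    unfolding hk_colouring.simps by (intro sep_ok_half_edge_colour) auto
  then show ?thesis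
    using \<open>v \<in> hk_ends e\<close> \<open>e = HE i\<close> by (auto simp: sep_ok_commute)
qed

lemma hk_colouring_total_colouring:
  assumes "latin_square k L" and "n \<ge> 1"
  shows "total_colouring (n * (k + 1) + 1) n (hk_vertices k) (hk_edges k) hk_ends
           (hk_colouring k n a L)"
  unfolding total_colouring_def
proof (intro conjI ballI impI)
  show "hk_colouring k n a L c < n * (k + 1) + 1" if "c \<in> hk_vertices k \<union> hk_edges k" for c
    using hk_colouring_less[OF assms that] .
qed (use assms hk_colouring_adjacent_vertices hk_colouring_adjacent_edges hk_colouring_incident
      in blast)+

theorem lemma3:
  fixes k n :: nat and e e' x x' :: hk_elt
  assumes "k \<ge> 2"
    and "e \<in> hk_half_edges k" and "e' \<in> hk_half_edges k" and "e \<noteq> e'"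
    and "hk_ends e = {x}" and "hk_ends e' = {x'}"
    and "n \<ge> 1"
  shows "\<exists>\<gamma>. total_colouring (n * (k + 1) + 1) n (hk_vertices k) (hk_edges k) hk_ends \<gamma>
            \<and> \<gamma> e = 0 \<and> \<gamma> e' = 1 \<and> \<gamma> x = n + 1 \<and> \<gamma> x' = n * k + 1"
proof -
  obtain a b where e: "e = HE a" "a < k" and e': "e' = HE b" "b < k"
    using assms(2,3) by (auto simp: hk_half_edges_def)
  then have "a \<noteq> b" "x = VA a" "x' = VA b"
    using assms(4-6) by auto
  moreover obtain L where "latin_square k L" "L a (k - 1) = 1" "L b (k - 1) = k"
    using latin_square_last_column[OF \<open>a < k\<close> \<open>b < k\<close> \<open>a \<noteq> b\<close>] by blast
  ultimately show ?thesis
    using hk_colouring_total_colouring[OF \<open>latin_square k L\<close> \<open>n \<ge> 1\<close>] e e'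
    by (intro exI[of _ "hk_colouring k n a L"]) auto
qed

end
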